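(* Let $s\ge2$, $\delta\ge2$, and let $\mathcal{C}$ be an $[n,k,d]_q$ linear code with multiple $(r_i,\delta)_{i\in[s]}$ localities (i.e. $\delta_1=\dots=\delta_s=\delta$) with respect to a partition $\mathcal{T}_1,\dots,\mathcal{T}_s$ of $[n]$, $n_i=|\mathcal{T}_i|$, $r_1\le\dots\le r_s$. Let $\Delta_0=0$ and $\Delta_j=\sum_{i=1}^{j}\lceil n_i/(r_i+\delta-1)\rceil(\delta-1)$ for $j=1,\dots,s-1$. Suppose $\sum_{i=1}^{s-1}r_i\lceil n_i/(r_i+\delta-1)\rceil\le k-1$ and, for each $j=1,\dots,s-1$, $$r_j\left\lceil\frac{\Delta_j-\Delta_{j-1}-1}{\delta-1}\right\rceil+(\Delta_j-\Delta_{j-1}-1)<n_j.$$ Then $d\le n-k+1-(\Gamma-1)(\delta-1)$, where $$\Gamma=\sum_{i=1}^{s-1}\left\lceil\frac{n_i}{r_i+\delta-1}\right\rceil+\left\lceil\frac{k-\sum_{i=1}^{s-1}r_i\lceil n_i/(r_i+\delta-1)\rceil}{r_s}\right\rceil.$$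
   Context: $[n]=\{1,\dots,n\}$. For an $[n,k,d]_q$ linear code with generator matrix columns $\vec g_1,\dots,\vec g_n$, a regenerating set of coordinate $i$ is a (minimal) subset $R\subseteq[n]$ with $i\in R$ such that $\vec g_i$ is an $\mathbb{F}_q$-linear combination of $\{\vec g_j\}_{j\in R\setminus\{i\}}$ and no proper subset of $R\setminus\{i\}$ suffices; $\mathcal{R}_i$ is the set of regenerating sets of coordinate $i$. Multiple $(r_i,\delta)_{i\in[s]}$ localities: $\mathcal{T}_1,\dots,\mathcal{T}_s$ is a partition of $[n]$, $r_1\le\dots\le r_s$ are integers, and for each $i\in[s]$ and each $\iota\in\mathcal{T}_i$ there is $S_\iota\subseteq\mathcal{T}_i$ with $\iota\in S_\iota$, $\delta\le|S_\iota|\le r_i+\delta-1$, such that for every $E\subseteq S_\iota$ with $|E|=\delta-1$ and every $j\in E$, $(S_\iota\setminus E)\cup\{j\}\in\mathcal{R}_j$. *)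

theory Defs
  imports Complex_Main
begin

text \<open>A linear code of length n and dimension k over a finite field 'a is given by a
k x n generator matrix G, with G t j the entry in row t (t < k) and column j (j in {1..n}).\<close>

definition in_col_span :: "(nat \<Rightarrow> nat \<Rightarrow> 'a::field) \<Rightarrow> nat \<Rightarrow> nat set \<Rightarrow> nat \<Rightarrow> bool" where
  "in_col_span G k S i \<longleftrightarrow> (\<exists>c. \<forall>t<k. G t i = (\<Sum>j\<in>S. c j * G t j))"

definition regenerating_set :: "(nat \<Rightarrow> nat \<Rightarrow> 'a::field) \<Rightarrow> nat \<Rightarrow> nat \<Rightarrow> nat \<Rightarrow> nat set \<Rightarrow> bool" where
  "regenerating_set G k n i R \<longleftrightarrow> i \<in> R \<and> R \<subseteq> {1..n} \<and> in_col_span G k (R - {i}) i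
     \<and> (\<forall>S. S \<subset> R - {i} \<longrightarrow> \<not> in_col_span G k S i)"

definition codeword :: "(nat \<Rightarrow> nat \<Rightarrow> 'a::field) \<Rightarrow> nat \<Rightarrow> (nat \<Rightarrow> 'a) \<Rightarrow> nat \<Rightarrow> 'a" where
  "codeword G k m j = (\<Sum>t<k. m t * G t j)"

definition code :: "(nat \<Rightarrow> nat \<Rightarrow> 'a::field) \<Rightarrow> nat \<Rightarrow> nat \<Rightarrow> (nat \<Rightarrow> 'a) set" where
  "code G k n = {c. \<exists>m. \<forall>j. c j = (if j \<in> {1..n} then codeword G k m j else 0)}"

definition hweight :: "nat \<Rightarrow> (nat \<Rightarrow> 'a::zero) \<Rightarrow> nat" where
  "hweight n c = card {j\<in>{1..n}. c j \<noteq> 0}"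

definition is_linear_code :: "(nat \<Rightarrow> nat \<Rightarrow> 'a::field) \<Rightarrow> nat \<Rightarrow> nat \<Rightarrow> nat \<Rightarrow> bool" where
  "is_linear_code G n k d \<longleftrightarrow>
     1 \<le> k \<and> k \<le> n \<and>
     (\<forall>m. (\<forall>j\<in>{1..n}. codeword G k m j = 0) \<longrightarrow> (\<forall>t<k. m t = 0)) \<and>
     d = Min (hweight n ` (code G k n - {\<lambda>_. 0}))"

definition is_partition :: "nat \<Rightarrow> nat \<Rightarrow> (nat \<Rightarrow> nat set) \<Rightarrow> bool" where
  "is_partition n s T \<longleftrightarrow>
     (\<forall>i\<in>{1..s}. T i \<noteq> {}) \<and>
     (\<forall>i\<in>{1..s}. \<forall>j\<in>{1..s}. i \<noteq> j \<longrightarrow> T i \<inter> T j = {}) \<and>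
     (\<Union>i\<in>{1..s}. T i) = {1..n}"

definition multiple_localities ::
  "(nat \<Rightarrow> nat \<Rightarrow> 'a::field) \<Rightarrow> nat \<Rightarrow> nat \<Rightarrow> nat \<Rightarrow> (nat \<Rightarrow> nat set) \<Rightarrow> (nat \<Rightarrow> nat) \<Rightarrow> nat \<Rightarrow> bool" where
  "multiple_localities G n k s T r \<delta> \<longleftrightarrow>
     is_partition n s T \<and>
     (\<forall>i j. 1 \<le> i \<longrightarrow> i \<le> j \<longrightarrow> j \<le> s \<longrightarrow> r i \<le> r j) \<and>
     (\<forall>i\<in>{1..s}. \<forall>\<iota>\<in>T i. \<exists>S. S \<subseteq> T i \<and> \<iota> \<in> S \<and> \<delta> \<le> card S \<and> card S \<le> r i + \<delta> - 1 \<and>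
        (\<forall>E. E \<subseteq> S \<longrightarrow> card E = \<delta> - 1 \<longrightarrow>
           (\<forall>j\<in>E. regenerating_set G k n j ((S - E) \<union> {j}))))"

end

theory Submission
  imports Defs "HOL-Library.FuncSet" "HOL-Library.Cardinality"
begin

text \<open>For a set X of coordinates, the messages whose codeword vanishes on X form a subspace
of size q^(k - rank X); a coordinate outside the span of X is "undetermined" by X. If a
local repair group S contains a coordinate undetermined by X, absorbing S adds the
|S - X| coordinates of S - X but raises the rank by at most |S - X| - (\<delta> - 1), since
any \<delta> - 1 of them are spanned by the remaining coordinates of S. Absorb greedily the
classes T_1, ..., T_(s-1) (the ceiling hypotheses guarantee each class T_i at least
\<lceil>n_i / (r_i + \<delta> - 1)\<rceil> (\<delta> - 1) surplus coordinates), then groups of size at most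
r_s + \<delta> - 1 until the rank is within r_s of k, and finally single coordinates until the
rank is k - 1. The resulting set Y has at least k - 1 + (\<Gamma> - 1)(\<delta> - 1) elements and a
nonzero codeword vanishes on it, so d \<le> n - |Y|.\<close>

definition messages :: "nat \<Rightarrow> (nat \<Rightarrow> 'a::zero) set" where
  "messages k = {m. \<forall>t. k \<le> t \<longrightarrow> m t = 0}"

definition vanishing_messages :: "(nat \<Rightarrow> nat \<Rightarrow> 'a::field) \<Rightarrow> nat \<Rightarrow> nat set \<Rightarrow> (nat \<Rightarrow> 'a) set" where
  "vanishing_messages G k X = {m \<in> messages k. \<forall>j\<in>X. codeword G k m j = 0}"

definition determined_by :: "(nat \<Rightarrow> nat \<Rightarrow> 'a::field) \<Rightarrow> nat \<Rightarrow> nat set \<Rightarrow> nat \<Rightarrow> bool" where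
  "determined_by G k X e \<longleftrightarrow> (\<forall>m\<in>vanishing_messages G k X. codeword G k m e = 0)"

definition repair_group :: "(nat \<Rightarrow> nat \<Rightarrow> 'a::field) \<Rightarrow> nat \<Rightarrow> nat \<Rightarrow> nat \<Rightarrow> nat set \<Rightarrow> bool" where
  "repair_group G k n \<delta> S \<longleftrightarrow> (\<forall>E. E \<subseteq> S \<longrightarrow> card E = \<delta> - 1 \<longrightarrow>
     (\<forall>j\<in>E. regenerating_set G k n j ((S - E) \<union> {j})))"

definition locally_repairable ::
  "(nat \<Rightarrow> nat \<Rightarrow> 'a::field) \<Rightarrow> nat \<Rightarrow> nat \<Rightarrow> nat \<Rightarrow> nat \<Rightarrow> nat set \<Rightarrow> bool" where
  "locally_repairable G k n \<delta> r P \<longleftrightarrow> (\<forall>\<iota>\<in>P. \<exists>S. S \<subseteq> P \<and> \<iota> \<in> S \<and> \<delta> \<le> card S \<and>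
     card S \<le> r + \<delta> - 1 \<and> repair_group G k n \<delta> S)"

subsection \<open>Counting messages\<close>

lemma codeword_diff: "codeword G k (\<lambda>t. m t - m' t) j = codeword G k m j - codeword G k m' j"
  unfolding codeword_def by (simp add: left_diff_distrib sum_subtractf)

lemma messages_eq_image_PiE:
  "messages k = (\<lambda>f t. if t < k then f t else 0) ` ({..<k} \<rightarrow>\<^sub>E (UNIV :: 'a::zero set))"
proof
  show "messages k \<subseteq> (\<lambda>f t. if t < k then f t else 0) ` ({..<k} \<rightarrow>\<^sub>E (UNIV :: 'a set))"
  proof
    fix m :: "nat \<Rightarrow> 'a" assume "m \<in> messages k"
    then have "m = (\<lambda>t. if t < k then restrict m {..<k} t else 0)"
      by (simp add: messages_def fun_eq_iff)
    then show "m \<in> (\<lambda>f t. if t < k then f t else 0) ` ({..<k} \<rightarrow>\<^sub>E UNIV)"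
      by (rule image_eqI[where x = "restrict m {..<k}"]) simp
  qed
qed (simp add: messages_def image_subset_iff)

lemma card_messages: "card (messages k :: (nat \<Rightarrow> 'a::{zero,finite}) set) = CARD('a) ^ k"
proof -
  have "inj_on (\<lambda>f t. if t < k then f t else (0::'a)) ({..<k} \<rightarrow>\<^sub>E UNIV)"
  proof (rule inj_onI)
    fix f g :: "nat \<Rightarrow> 'a"
    assume f: "f \<in> {..<k} \<rightarrow>\<^sub>E UNIV" and g: "g \<in> {..<k} \<rightarrow>\<^sub>E UNIV"
      and eq: "(\<lambda>t. if t < k then f t else 0) = (\<lambda>t. if t < k then g t else 0)"
    show "f = g"
    proof
      fix t show "f t = g t"
        using fun_cong[OF eq, of t] PiE_arb[OF f, of t] PiE_arb[OF g, of t] by (cases "t < k") auto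
    qed
  qed
  then show ?thesis
    unfolding messages_eq_image_PiE by (simp add: card_image card_PiE)
qed

lemma finite_vanishing_messages:
  "finite (vanishing_messages G k X :: (nat \<Rightarrow> 'a::{field,finite}) set)"
proof -
  have "finite (messages k :: (nat \<Rightarrow> 'a) set)"
    unfolding messages_eq_image_PiE by (intro finite_imageI finite_PiE) auto
  then show ?thesis by (rule finite_subset[rotated]) (auto simp: vanishing_messages_def)
qed

lemma card_vanishing_messages_empty:
  "card (vanishing_messages G k {} :: (nat \<Rightarrow> 'a::{field,finite}) set) = CARD('a) ^ k"
  by (simp add: vanishing_messages_def card_messages)

text \<open>Fixing the value at e splits the messages vanishing on X into CARD('a) fibres, each a
translate of a subset of the messages vanishing on insert e X.\<close>

lemma card_vanishing_messages_insert:
  fixes G :: "nat \<Rightarrow> nat \<Rightarrow> 'a::{field,finite}"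
  shows "card (vanishing_messages G k X) \<le> CARD('a) * card (vanishing_messages G k (insert e X))"
proof -
  let ?V = "vanishing_messages G k X" and ?W = "vanishing_messages G k (insert e X)"
  define F where "F c = {m \<in> ?V. codeword G k m e = c}" for c
  have fibre: "card (F c) \<le> card ?W" for c
  proof (cases "F c = {}")
    case False
    then obtain m0 where m0: "m0 \<in> F c" by blast
    have "inj_on (\<lambda>m t. m t - m0 t) (F c)"
      by (rule inj_onI) (simp add: fun_eq_iff)
    moreover have "(\<lambda>m t. m t - m0 t) ` F c \<subseteq> ?W"
      using m0 by (auto simp: F_def vanishing_messages_def messages_def codeword_diff)
    ultimately show ?thesis
      by (rule card_inj_on_le[OF _ _ finite_vanishing_messages])
  qed simp
  have "?V = (\<Union>c. F c)" unfolding F_def by blast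
  then have "card ?V \<le> (\<Sum>c\<in>UNIV. card (F c))"
    using card_UN_le[of "UNIV :: 'a set" F] by simp
  also have "\<dots> \<le> (\<Sum>c\<in>(UNIV :: 'a set). card ?W)"
    by (rule sum_mono) (rule fibre)
  finally show ?thesis by simp
qed

lemma card_vanishing_messages_union:
  fixes G :: "nat \<Rightarrow> nat \<Rightarrow> 'a::{field,finite}"
  assumes "finite Y"
  shows "card (vanishing_messages G k X) \<le> CARD('a) ^ card Y * card (vanishing_messages G k (X \<union> Y))"
  using assms
proof (induction Y rule: finite_induct)
  case (insert y Y)
  have "card (vanishing_messages G k X) \<le> CARD('a) ^ card Y * card (vanishing_messages G k (X \<union> Y))"
    by (rule insert.IH)
  also have "\<dots> \<le> CARD('a) ^ card Y * (CARD('a) * card (vanishing_messages G k (insert y (X \<union> Y))))"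
    by (intro mult_left_mono card_vanishing_messages_insert) auto
  finally show ?case using insert.hyps by (simp add: ac_simps)
qed simp

lemma two_le_card_vanishing_messages:
  fixes G :: "nat \<Rightarrow> nat \<Rightarrow> 'a::{field,finite}"
  assumes "card (vanishing_messages G k {}) \<le> CARD('a) ^ b * card (vanishing_messages G k X)"
    and "b < k"
  shows "2 \<le> card (vanishing_messages G k X)"
proof (rule ccontr)
  assume small: "\<not> 2 \<le> card (vanishing_messages G k X)"
  have q: "2 \<le> CARD('a)"
    using card_mono[of "UNIV :: 'a set" "{0, 1}"] by simp
  have "CARD('a) ^ b * card (vanishing_messages G k X) \<le> CARD('a) ^ b"
    using small by simp
  also have "\<dots> < CARD('a) ^ k"
    using q \<open>b < k\<close> by (intro power_strict_increasing) auto
  finally show False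
    using assms(1) by (simp add: card_vanishing_messages_empty)
qed

lemma nonzero_vanishing_message:
  assumes "2 \<le> card (vanishing_messages G k X)"
  obtains m where "m \<in> vanishing_messages G k X" "m \<noteq> (\<lambda>_. 0)"
proof -
  have "\<not> vanishing_messages G k X \<subseteq> {\<lambda>_. 0}"
    using assms card_mono[of "{\<lambda>_. 0}" "vanishing_messages G k X"] by auto
  then show ?thesis using that by blast
qed

lemma nonzero_message_codeword_nonzero:
  assumes indep: "\<forall>m. (\<forall>j\<in>{1..n}. codeword G k m j = 0) \<longrightarrow> (\<forall>t<k. m t = 0)"
    and "m \<in> messages k" "m \<noteq> (\<lambda>_. 0)"
  shows "\<exists>j\<in>{1..n}. codeword G k m j \<noteq> 0"
proof (rule ccontr)
  assume "\<not> ?thesis"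
  then have "\<forall>t<k. m t = 0" using indep by blast
  moreover have "\<forall>t. k \<le> t \<longrightarrow> m t = 0" using \<open>m \<in> messages k\<close> by (simp add: messages_def)
  ultimately have "m = (\<lambda>_. 0)" by (metis not_less)
  with \<open>m \<noteq> (\<lambda>_. 0)\<close> show False ..
qed

lemma exists_undetermined:
  assumes "\<forall>m. (\<forall>j\<in>{1..n}. codeword G k m j = 0) \<longrightarrow> (\<forall>t<k. m t = 0)"
    and "2 \<le> card (vanishing_messages G k X)"
  obtains e where "e \<in> {1..n}" "\<not> determined_by G k X e"
proof -
  obtain m where m: "m \<in> vanishing_messages G k X" "m \<noteq> (\<lambda>_. 0)"
    using nonzero_vanishing_message[OF assms(2)] .
  then have "\<exists>e\<in>{1..n}. codeword G k m e \<noteq> 0"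
    using nonzero_message_codeword_nonzero[OF assms(1)] by (simp add: vanishing_messages_def)
  then show ?thesis using m(1) that unfolding determined_by_def by blast
qed

lemma min_distance_le:
  fixes G :: "nat \<Rightarrow> nat \<Rightarrow> 'a::field"
  assumes code: "is_linear_code G n k d" and "Y \<subseteq> {1..n}"
    and "2 \<le> card (vanishing_messages G k Y)"
  shows "d + card Y \<le> n"
proof -
  obtain m where m: "m \<in> vanishing_messages G k Y" "m \<noteq> (\<lambda>_. 0)"
    using nonzero_vanishing_message[OF assms(3)] .
  define c where "c j = (if j \<in> {1..n} then codeword G k m j else 0)" for j
  have indep: "\<forall>m. (\<forall>j\<in>{1..n}. codeword G k m j = 0) \<longrightarrow> (\<forall>t<k. m t = 0)"
    and d: "d = Min (hweight n ` (code G k n - {\<lambda>_. 0}))"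
    using code unfolding is_linear_code_def by auto
  have "c \<in> code G k n" unfolding code_def c_def by blast
  moreover have "c \<noteq> (\<lambda>_. 0)"
    using nonzero_message_codeword_nonzero[OF indep, of m] m
    by (auto simp: c_def vanishing_messages_def fun_eq_iff)
  moreover have "hweight n c' \<le> n" for c' :: "nat \<Rightarrow> 'a"
  proof -
    have "card {j \<in> {1..n}. c' j \<noteq> 0} \<le> card {1..n}" by (rule card_mono) auto
    then show ?thesis unfolding hweight_def by simp
  qed
  then have "hweight n ` (code G k n - {\<lambda>_. 0}) \<subseteq> {..n}" by auto
  then have "finite (hweight n ` (code G k n - {\<lambda>_. 0}))" by (rule finite_subset) simp
  ultimately have "d \<le> hweight n c" unfolding d by (intro Min_le) auto
  also have "\<dots> \<le> card ({1..n} - Y)"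
    unfolding hweight_def c_def using m(1) by (intro card_mono) (auto simp: vanishing_messages_def)
  also have "\<dots> = n - card Y"
    using \<open>Y \<subseteq> {1..n}\<close> by (simp add: card_Diff_subset finite_subset)
  finally show ?thesis
    using card_mono[OF _ \<open>Y \<subseteq> {1..n}\<close>] by simp
qed

subsection \<open>Absorbing repair groups\<close>

lemma vanishing_messages_union_determined:
  "\<forall>e\<in>Y. determined_by G k X e \<Longrightarrow> vanishing_messages G k (X \<union> Y) = vanishing_messages G k X"
  by (auto simp: vanishing_messages_def determined_by_def)

lemma determined_by_mem: "e \<in> X \<Longrightarrow> determined_by G k X e"
  by (auto simp: vanishing_messages_def determined_by_def)

lemma determined_by_in_col_span:
  assumes "in_col_span G k B e" "B \<subseteq> X"
  shows "determined_by G k X e"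
  unfolding determined_by_def
proof
  fix m assume m: "m \<in> vanishing_messages G k X"
  obtain c where c: "\<forall>t<k. G t e = (\<Sum>j\<in>B. c j * G t j)"
    using assms(1) unfolding in_col_span_def by blast
  have "codeword G k m e = (\<Sum>t<k. \<Sum>j\<in>B. c j * (m t * G t j))"
    unfolding codeword_def using c by (simp add: sum_distrib_left mult.left_commute)
  also have "\<dots> = (\<Sum>j\<in>B. c j * codeword G k m j)"
    unfolding codeword_def by (subst sum.swap) (simp add: sum_distrib_left)
  also have "\<dots> = 0"
    using m assms(2) by (auto simp: vanishing_messages_def intro!: sum.neutral)
  finally show "codeword G k m e = 0" .
qed

lemma repair_group_determined:
  assumes "repair_group G k n \<delta> S" "finite S" "B \<subseteq> S" "card B + (\<delta> - 1) = card S"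
    and "j \<in> S - B" "B \<subseteq> X"
  shows "determined_by G k X j"
proof -
  have "card (S - B) = \<delta> - 1"
    using assms(2-4) by (simp add: card_Diff_subset finite_subset)
  then have "regenerating_set G k n j ((S - (S - B)) \<union> {j})"
    using assms(1,5) unfolding repair_group_def by blast
  moreover have "(S - (S - B)) \<union> {j} - {j} = B" using assms(3,5) by auto
  ultimately have "in_col_span G k B j"
    unfolding regenerating_set_def by metis
  then show ?thesis using assms(6) by (rule determined_by_in_col_span)
qed

text \<open>If S contained fewer than \<delta> coordinates outside X, the \<delta> - 1 coordinates of S
missing from some large subset of S \<inter> X would include \<iota> and be determined by X. Otherwise
all but \<delta> - 1 of the new coordinates determine the rest.\<close>

lemma card_vanishing_messages_absorb:
  fixes G :: "nat \<Rightarrow> nat \<Rightarrow> 'a::{field,finite}"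
  assumes S: "repair_group G k n \<delta> S" "finite S" "\<iota> \<in> S" "\<delta> \<le> card S"
    and X: "finite X" "\<not> determined_by G k X \<iota>"
  shows "\<delta> \<le> card (S - X)"
    and "card (vanishing_messages G k X)
           \<le> CARD('a) ^ (card (S - X) - (\<delta> - 1)) * card (vanishing_messages G k (X \<union> S))"
proof -
  have cS: "card S = card (S \<inter> X) + card (S - X)"
    using \<open>finite S\<close> by (rule card_Int_Diff)
  show new: "\<delta> \<le> card (S - X)"
  proof (rule ccontr)
    assume "\<not> \<delta> \<le> card (S - X)"
    then obtain B where B: "B \<subseteq> S \<inter> X" "card B = card S - (\<delta> - 1)"
      using cS obtain_subset_with_card_n[of "card S - (\<delta> - 1)" "S \<inter> X"] by force
    have "determined_by G k X \<iota>"
    proof (cases "\<iota> \<in> B")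
      case False
      show ?thesis by (rule repair_group_determined[OF S(1,2), of B]) (use B S(3,4) False in auto)
    qed (use B determined_by_mem in blast)
    with X(2) show False ..
  qed
  obtain A where A: "A \<subseteq> S - X" "card A = card (S - X) - (\<delta> - 1)"
    using obtain_subset_with_card_n[of "card (S - X) - (\<delta> - 1)" "S - X"] by auto
  have fA: "finite A" using A(1) \<open>finite S\<close> finite_subset by blast
  have "card ((S \<inter> X) \<union> A) = card (S \<inter> X) + card A"
    using A(1) \<open>finite S\<close> fA by (intro card_Un_disjoint) auto
  then have cB: "card ((S \<inter> X) \<union> A) + (\<delta> - 1) = card S" using A(2) cS new by simp
  have "\<forall>j\<in>S - ((S \<inter> X) \<union> A). determined_by G k (X \<union> A) j"
    using repair_group_determined[OF S(1,2) _ cB] A(1) by blast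
  moreover have "X \<union> S = (X \<union> A) \<union> (S - ((S \<inter> X) \<union> A))" using A(1) by auto
  ultimately have "vanishing_messages G k (X \<union> S) = vanishing_messages G k (X \<union> A)"
    by (simp add: vanishing_messages_union_determined)
  then show "card (vanishing_messages G k X)
      \<le> CARD('a) ^ (card (S - X) - (\<delta> - 1)) * card (vanishing_messages G k (X \<union> S))"
    using card_vanishing_messages_union[OF fA, of G k X] A(2) by simp
qed

lemma locally_repairable_absorb:
  fixes G :: "nat \<Rightarrow> nat \<Rightarrow> 'a::{field,finite}"
  assumes "locally_repairable G k n \<delta> r P" "finite P" "\<iota> \<in> P"
    and "finite X" "\<not> determined_by G k X \<iota>"
  obtains S where "S \<subseteq> P" "\<iota> \<in> S" "\<delta> \<le> card (S - X)" "card (S - X) \<le> r + \<delta> - 1"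
    "card (vanishing_messages G k X)
       \<le> CARD('a) ^ (card (S - X) - (\<delta> - 1)) * card (vanishing_messages G k (X \<union> S))"
proof -
  obtain S where S: "S \<subseteq> P" "\<iota> \<in> S" "\<delta> \<le> card S" "card S \<le> r + \<delta> - 1" "repair_group G k n \<delta> S"
    using assms(1,3) unfolding locally_repairable_def by blast
  have "finite S" using S(1) assms(2) by (rule finite_subset)
  moreover have "card (S - X) \<le> card S" using \<open>finite S\<close> by (intro card_mono) auto
  ultimately show ?thesis
    using that[OF S(1,2)] card_vanishing_messages_absorb[OF S(5) _ S(2,3) assms(4,5)] S(4) by auto
qed

subsection \<open>Greedy absorption\<close>

text \<open>Invariant of the greedy absorption of a class: W is covered by the m groups absorbed so
far, which raised the rank by at most c.\<close>

lemma absorb_class: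
  fixes G :: "nat \<Rightarrow> nat \<Rightarrow> 'a::{field,finite}"
  assumes loc: "locally_repairable G k n \<delta> r P" and "finite P" "finite X" "X \<inter> P = {}"
  shows "W \<subseteq> P \<Longrightarrow>
    card (vanishing_messages G k X) \<le> CARD('a) ^ c * card (vanishing_messages G k (X \<union> W)) \<Longrightarrow>
    c \<le> m * r \<Longrightarrow> c + m * (\<delta> - 1) \<le> card W \<Longrightarrow>
    \<exists>c m. card (vanishing_messages G k X) \<le> CARD('a) ^ c * card (vanishing_messages G k (X \<union> P))
      \<and> c \<le> m * r \<and> c + m * (\<delta> - 1) \<le> card P"
proof (induction "card (P - W)" arbitrary: W c m rule: less_induct)
  case less
  have fW: "finite W" using less.prems(1) \<open>finite P\<close> by (rule finite_subset)
  show ?case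
  proof (cases "\<forall>e\<in>P - W. determined_by G k (X \<union> W) e")
    case True
    have "X \<union> P = (X \<union> W) \<union> (P - W)" using less.prems(1) by auto
    then have "vanishing_messages G k (X \<union> P) = vanishing_messages G k (X \<union> W)"
      using vanishing_messages_union_determined[OF True] by simp
    moreover have "card W \<le> card P" using less.prems(1) \<open>finite P\<close> by (rule card_mono[rotated])
    ultimately show ?thesis using less.prems by (intro exI[of _ c] exI[of _ m]) auto
  next
    case False
    then obtain \<iota> where \<iota>: "\<iota> \<in> P - W" "\<not> determined_by G k (X \<union> W) \<iota>" by blast
    then obtain S where S: "S \<subseteq> P" "\<iota> \<in> S" "\<delta> \<le> card (S - (X \<union> W))"
        "card (S - (X \<union> W)) \<le> r + \<delta> - 1"
        "card (vanishing_messages G k (X \<union> W)) \<le> CARD('a) ^ (card (S - (X \<union> W)) - (\<delta> - 1))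
           * card (vanishing_messages G k ((X \<union> W) \<union> S))"
      using locally_repairable_absorb[OF loc \<open>finite P\<close>, of \<iota> "X \<union> W"] \<open>finite X\<close> fW by blast
    have SW: "S - (X \<union> W) = S - W" using S(1) \<open>X \<inter> P = {}\<close> by auto
    let ?d = "card (S - W) - (\<delta> - 1)"
    have "card (P - (W \<union> S)) < card (P - W)"
      using \<iota>(1) S(2) \<open>finite P\<close> by (intro psubset_card_mono) auto
    moreover have "W \<union> S \<subseteq> P" using less.prems(1) S(1) by auto
    moreover have "card (vanishing_messages G k X)
        \<le> CARD('a) ^ (c + ?d) * card (vanishing_messages G k (X \<union> (W \<union> S)))"
    proof -
      have "card (vanishing_messages G k X) \<le> CARD('a) ^ c * card (vanishing_messages G k (X \<union> W))"
        by (rule less.prems(2))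
      also have "\<dots> \<le> CARD('a) ^ c * (CARD('a) ^ ?d * card (vanishing_messages G k (X \<union> (W \<union> S))))"
        using S(5) unfolding SW by (intro mult_left_mono) (auto simp: Un_assoc)
      finally show ?thesis by (simp add: power_add)
    qed
    moreover have "c + ?d \<le> Suc m * r" using less.prems(3) S(4) unfolding SW by simp
    moreover have "card (W \<union> S) = card W + card (S - W)"
      using fW S(1) \<open>finite P\<close> card_Un_disjoint[of W "S - W"] by (auto intro: finite_subset)
    then have "c + ?d + Suc m * (\<delta> - 1) \<le> card (W \<union> S)"
      using less.prems(4) S(3) unfolding SW by simp
    ultimately show ?thesis by (rule less.hyps)
  qed
qed

lemma absorb_class_bound:
  fixes G :: "nat \<Rightarrow> nat \<Rightarrow> 'a::{field,finite}"
  assumes "locally_repairable G k n \<delta> r P" "finite P" "finite X" "X \<inter> P = {}"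
    and upper: "card P \<le> t * (r + (\<delta> - 1))" and lower: "r * (t - 1) + t * (\<delta> - 1) \<le> card P"
  obtains c where "card (vanishing_messages G k X) \<le> CARD('a) ^ c * card (vanishing_messages G k (X \<union> P))"
    "c \<le> r * t" "t * (\<delta> - 1) + c \<le> card P"
proof -
  obtain c m where cm: "card (vanishing_messages G k X) \<le> CARD('a) ^ c * card (vanishing_messages G k (X \<union> P))"
      "c \<le> m * r" "c + m * (\<delta> - 1) \<le> card P"
    using absorb_class[OF assms(1-4), of "{}" 0 0] by auto
  have "c \<le> r * t"
  proof (cases "m \<le> t")
    case True
    then have "m * r \<le> t * r" by (rule mult_le_mono1)
    then show ?thesis using cm(2) by (metis le_trans mult.commute)
  next
    case False
    then have "t * (\<delta> - 1) \<le> m * (\<delta> - 1)" by simp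
    then show ?thesis using cm(3) upper by (simp add: algebra_simps)
  qed
  moreover have "t * (\<delta> - 1) + c \<le> card P"
  proof (cases "t \<le> m")
    case True
    then have "t * (\<delta> - 1) \<le> m * (\<delta> - 1)" by (rule mult_le_mono1)
    then show ?thesis using cm(3) by linarith
  next
    case False
    then have "m * r \<le> (t - 1) * r" by (intro mult_le_mono1) simp
    then have "c \<le> r * (t - 1)" using cm(2) by (metis le_trans mult.commute)
    then show ?thesis using lower by linarith
  qed
  ultimately show ?thesis using that cm(1) by blast
qed

lemma absorb_classes:
  fixes G :: "nat \<Rightarrow> nat \<Rightarrow> 'a::{field,finite}" and j :: nat and r t :: "nat \<Rightarrow> nat"
  assumes "\<And>i. i \<in> {1..j} \<Longrightarrow> locally_repairable G k n \<delta> (r i) (T i)"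
    and "\<And>i. i \<in> {1..j} \<Longrightarrow> finite (T i)"
    and "\<And>i i'. i \<in> {1..j} \<Longrightarrow> i' \<in> {1..j} \<Longrightarrow> i \<noteq> i' \<Longrightarrow> T i \<inter> T i' = {}"
    and "\<And>i. i \<in> {1..j} \<Longrightarrow> card (T i) \<le> t i * (r i + (\<delta> - 1))"
    and "\<And>i. i \<in> {1..j} \<Longrightarrow> r i * (t i - 1) + t i * (\<delta> - 1) \<le> card (T i)"
  shows "\<exists>b. card (vanishing_messages G k {})
              \<le> CARD('a) ^ b * card (vanishing_messages G k (\<Union>i\<in>{1..j}. T i))
         \<and> b \<le> (\<Sum>i=1..j. r i * t i) \<and> (\<delta> - 1) * (\<Sum>i=1..j. t i) + b \<le> card (\<Union>i\<in>{1..j}. T i)"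
  using assms
proof (induction j)
  case 0 show ?case by (rule exI[of _ 0]) simp
next
  case (Suc j)
  let ?U = "\<Union>i\<in>{1..j}. T i"
  have "\<exists>b. card (vanishing_messages G k {}) \<le> CARD('a) ^ b * card (vanishing_messages G k ?U)
      \<and> b \<le> (\<Sum>i=1..j. r i * t i) \<and> (\<delta> - 1) * (\<Sum>i=1..j. t i) + b \<le> card ?U"
    by (rule Suc.IH; rule Suc.prems; simp)
  then obtain b where b: "card (vanishing_messages G k {}) \<le> CARD('a) ^ b * card (vanishing_messages G k ?U)"
      "b \<le> (\<Sum>i=1..j. r i * t i)" "(\<delta> - 1) * (\<Sum>i=1..j. t i) + b \<le> card ?U"
    by blast
  have j: "Suc j \<in> {1..Suc j}" by simp
  have fU: "finite ?U" using Suc.prems(2) by simp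
  have disj: "?U \<inter> T (Suc j) = {}" using Suc.prems(3)[OF _ j] by fastforce
  obtain c where c: "card (vanishing_messages G k ?U)
        \<le> CARD('a) ^ c * card (vanishing_messages G k (?U \<union> T (Suc j)))"
      "c \<le> r (Suc j) * t (Suc j)" "t (Suc j) * (\<delta> - 1) + c \<le> card (T (Suc j))"
    using absorb_class_bound[OF Suc.prems(1)[OF j] Suc.prems(2)[OF j] fU disj
        Suc.prems(4)[OF j] Suc.prems(5)[OF j]] .
  have U: "(\<Union>i\<in>{1..Suc j}. T i) = ?U \<union> T (Suc j)" by (auto simp: atLeastAtMostSuc_conv)
  have "card (vanishing_messages G k {})
      \<le> CARD('a) ^ b * (CARD('a) ^ c * card (vanishing_messages G k (?U \<union> T (Suc j))))"
    using b(1) mult_le_mono2[OF c(1)] by (rule order.trans)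
  moreover have "card (?U \<union> T (Suc j)) = card ?U + card (T (Suc j))"
    using fU Suc.prems(2)[OF j] disj by (rule card_Un_disjoint)
  ultimately show ?case
    using b(2,3) c(2,3) unfolding U by (intro exI[of _ "b + c"]) (simp add: power_add algebra_simps)
qed

lemma extend_to_rank_k_minus_1:
  fixes G :: "nat \<Rightarrow> nat \<Rightarrow> 'a::{field,finite}"
  assumes indep: "\<forall>m. (\<forall>j\<in>{1..n}. codeword G k m j = 0) \<longrightarrow> (\<forall>t<k. m t = 0)"
  shows "X \<subseteq> {1..n} \<Longrightarrow>
    card (vanishing_messages G k {}) \<le> CARD('a) ^ b * card (vanishing_messages G k X) \<Longrightarrow> b < k \<Longrightarrow>
    \<exists>Y. Y \<subseteq> {1..n} \<and> card Y = card X + (k - 1 - b) \<and> 2 \<le> card (vanishing_messages G k Y)"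
proof (induction "k - 1 - b" arbitrary: X b)
  case 0
  then show ?case
    using two_le_card_vanishing_messages[OF 0(3,4)] by (intro exI[of _ X]) simp
next
  case (Suc l)
  obtain e where e: "e \<in> {1..n}" "\<not> determined_by G k X e"
    using exists_undetermined[OF indep two_le_card_vanishing_messages[OF Suc.prems(2,3)]] .
  have "finite X" using Suc.prems(1) by (rule finite_subset) simp
  moreover have "e \<notin> X" using e(2) determined_by_mem by blast
  ultimately have card_insert: "card (insert e X) = Suc (card X)" by simp
  have "card (vanishing_messages G k {})
      \<le> CARD('a) ^ b * (CARD('a) * card (vanishing_messages G k (insert e X)))"
    using Suc.prems(2) mult_le_mono2[OF card_vanishing_messages_insert] by (rule order.trans)
  then have "card (vanishing_messages G k {})
      \<le> CARD('a) ^ Suc b * card (vanishing_messages G k (insert e X))"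
    by (simp add: mult.left_commute)
  moreover have "l = k - 1 - Suc b" "Suc b < k" using Suc.hyps(2) by auto
  moreover have "insert e X \<subseteq> {1..n}" using Suc.prems(1) e(1) by simp
  ultimately obtain Y where "Y \<subseteq> {1..n}" "card Y = card (insert e X) + (k - 1 - Suc b)"
      "2 \<le> card (vanishing_messages G k Y)"
    using Suc.hyps(1) by blast
  then show ?case using card_insert \<open>Suc b < k\<close> by (intro exI[of _ Y]) simp
qed

text \<open>Absorbing groups of size at most \<rho> + \<delta> - 1 anywhere raises the rank by at most \<rho> per
group; m groups are absorbed before the rank is within \<rho> of k.\<close>

lemma absorb_until_rank_near_k:
  fixes G :: "nat \<Rightarrow> nat \<Rightarrow> 'a::{field,finite}"
  assumes loc: "locally_repairable G k n \<delta> \<rho> {1..n}"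
    and indep: "\<forall>m. (\<forall>j\<in>{1..n}. codeword G k m j = 0) \<longrightarrow> (\<forall>t<k. m t = 0)"
    and "1 \<le> \<delta>"
  shows "X \<subseteq> {1..n} \<Longrightarrow>
    card (vanishing_messages G k {}) \<le> CARD('a) ^ b * card (vanishing_messages G k X) \<Longrightarrow> b < k \<Longrightarrow>
    \<exists>Y m. Y \<subseteq> {1..n} \<and> 2 \<le> card (vanishing_messages G k Y) \<and> k \<le> b + Suc m * \<rho>
      \<and> card X + (k - 1 - b) + m * (\<delta> - 1) \<le> card Y"
proof (induction "n - card X" arbitrary: X b rule: less_induct)
  case less
  show ?case
  proof (cases "k \<le> b + \<rho>")
    case True
    obtain Y where "Y \<subseteq> {1..n}" "card Y = card X + (k - 1 - b)" "2 \<le> card (vanishing_messages G k Y)"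
      using extend_to_rank_k_minus_1[OF indep less.prems] by blast
    then show ?thesis using True by (intro exI[of _ Y] exI[of _ 0]) simp
  next
    case False
    obtain \<iota> where \<iota>: "\<iota> \<in> {1..n}" "\<not> determined_by G k X \<iota>"
      using exists_undetermined[OF indep two_le_card_vanishing_messages[OF less.prems(2,3)]] .
    have fX: "finite X" using less.prems(1) by (rule finite_subset) simp
    obtain S where S: "S \<subseteq> {1..n}" "\<iota> \<in> S" "\<delta> \<le> card (S - X)" "card (S - X) \<le> \<rho> + \<delta> - 1"
        "card (vanishing_messages G k X) \<le> CARD('a) ^ (card (S - X) - (\<delta> - 1))
           * card (vanishing_messages G k (X \<union> S))"
      by (rule locally_repairable_absorb[OF loc finite_atLeastAtMost \<iota>(1) fX \<iota>(2)])
    let ?d = "card (S - X) - (\<delta> - 1)"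
    have cXS: "card (X \<union> S) = card X + card (S - X)"
      using card_Un_disjoint[OF fX, of "S - X"] finite_subset[OF S(1)] by (simp add: Un_Diff_cancel)
    have sub: "X \<union> S \<subseteq> {1..n}" using less.prems(1) S(1) by auto
    then have shrink: "n - card (X \<union> S) < n - card X"
      using card_mono[OF _ sub] cXS S(3) \<open>1 \<le> \<delta>\<close> by simp
    have "card (vanishing_messages G k {})
        \<le> CARD('a) ^ b * (CARD('a) ^ ?d * card (vanishing_messages G k (X \<union> S)))"
      using less.prems(2) mult_le_mono2[OF S(5)] by (rule order.trans)
    then have bound: "card (vanishing_messages G k {})
        \<le> CARD('a) ^ (b + ?d) * card (vanishing_messages G k (X \<union> S))"
      by (simp add: power_add mult.assoc)
    have "b + ?d < k" using False S(4) by simp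
    then obtain Y m where Y: "Y \<subseteq> {1..n}" "2 \<le> card (vanishing_messages G k Y)"
        "k \<le> b + ?d + Suc m * \<rho>" "card (X \<union> S) + (k - 1 - (b + ?d)) + m * (\<delta> - 1) \<le> card Y"
      using less.hyps[OF shrink sub bound] by blast
    have "k \<le> b + Suc (Suc m) * \<rho>" using Y(3) S(4) by simp
    moreover have "card X + (k - 1 - b) + Suc m * (\<delta> - 1) \<le> card Y"
      using Y(4) cXS S(3) False by simp
    ultimately show ?thesis using Y(1,2) by blast
  qed
qed

lemma multiple_localities_class:
  assumes "multiple_localities G n k s T r \<delta>" "i \<in> {1..s}"
  shows "locally_repairable G k n \<delta> (r i) (T i)"
  using assms unfolding multiple_localities_def locally_repairable_def repair_group_def by blast

lemma multiple_localities_global: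
  assumes "multiple_localities G n k s T r \<delta>" "1 \<le> s"
  shows "locally_repairable G k n \<delta> (r s) {1..n}"
  unfolding locally_repairable_def
proof
  fix \<iota> assume "\<iota> \<in> {1..n}"
  have part: "is_partition n s T" and mono: "\<forall>i j. 1 \<le> i \<longrightarrow> i \<le> j \<longrightarrow> j \<le> s \<longrightarrow> r i \<le> r j"
    using assms(1) by (simp_all add: multiple_localities_def)
  then have cover: "(\<Union>i\<in>{1..s}. T i) = {1..n}" by (simp add: is_partition_def)
  then obtain i where i: "i \<in> {1..s}" "\<iota> \<in> T i" using \<open>\<iota> \<in> {1..n}\<close> by blast
  have "T i \<subseteq> {1..n}" using cover i(1) by blast
  moreover have "r i \<le> r s" using mono i(1) by simp
  moreover obtain S where "S \<subseteq> T i" "\<iota> \<in> S" "\<delta> \<le> card S" "card S \<le> r i + \<delta> - 1"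
      "repair_group G k n \<delta> S"
    using multiple_localities_class[OF assms(1) i(1)] i(2) unfolding locally_repairable_def by blast
  ultimately show "\<exists>S. S \<subseteq> {1..n} \<and> \<iota> \<in> S \<and> \<delta> \<le> card S \<and> card S \<le> r s + \<delta> - 1 \<and> repair_group G k n \<delta> S"
    by (intro exI[of _ S]) auto
qed

lemma min_distance_bound_multiple_localities:
  fixes G :: "nat \<Rightarrow> nat \<Rightarrow> 'a::{field,finite}"
  assumes code: "is_linear_code G n k d" and loc: "multiple_localities G n k s T r \<delta>"
    and "1 \<le> s" "1 \<le> \<delta>"
    and upper: "\<And>i. i \<in> {1..s-1} \<Longrightarrow> card (T i) \<le> t i * (r i + (\<delta> - 1))"
    and lower: "\<And>i. i \<in> {1..s-1} \<Longrightarrow> r i * (t i - 1) + t i * (\<delta> - 1) \<le> card (T i)"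
    and "(\<Sum>i=1..s-1. r i * t i) < k"
  obtains m where "k \<le> (\<Sum>i=1..s-1. r i * t i) + Suc m * r s"
    and "d + k - 1 + (\<delta> - 1) * ((\<Sum>i=1..s-1. t i) + m) \<le> n"
proof -
  have indep: "\<forall>m. (\<forall>j\<in>{1..n}. codeword G k m j = 0) \<longrightarrow> (\<forall>t<k. m t = 0)"
    using code by (simp add: is_linear_code_def)
  have part: "is_partition n s T" using loc by (simp add: multiple_localities_def)
  have class_sub: "T i \<subseteq> {1..n}" if "i \<in> {1..s-1}" for i
    using part that unfolding is_partition_def by force
  have class_loc: "locally_repairable G k n \<delta> (r i) (T i)" if "i \<in> {1..s-1}" for i
    by (rule multiple_localities_class[OF loc]) (use that in auto)
  have class_fin: "finite (T i)" if "i \<in> {1..s-1}" for i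
    using class_sub[OF that] finite_subset by blast
  have class_disj: "T i \<inter> T i' = {}" if "i \<in> {1..s-1}" "i' \<in> {1..s-1}" "i \<noteq> i'" for i i'
  proof -
    have "i \<in> {1..s}" "i' \<in> {1..s}" using that(1,2) by auto
    then show ?thesis using part that(3) unfolding is_partition_def by blast
  qed
  let ?U = "\<Union>i\<in>{1..s-1}. T i"
  have U: "?U \<subseteq> {1..n}" using class_sub by blast
  obtain b where b: "card (vanishing_messages G k {}) \<le> CARD('a) ^ b * card (vanishing_messages G k ?U)"
      "b \<le> (\<Sum>i=1..s-1. r i * t i)" "(\<delta> - 1) * (\<Sum>i=1..s-1. t i) + b \<le> card ?U"
    using absorb_classes[of "s - 1" G k n \<delta> r T t, OF class_loc class_fin class_disj upper lower] by blast
  have "b < k" using b(2) assms(7) by linarith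
  obtain Y m where Y: "Y \<subseteq> {1..n}" "2 \<le> card (vanishing_messages G k Y)" "k \<le> b + Suc m * r s"
      "card ?U + (k - 1 - b) + m * (\<delta> - 1) \<le> card Y"
    using absorb_until_rank_near_k[OF multiple_localities_global[OF loc \<open>1 \<le> s\<close>] indep \<open>1 \<le> \<delta>\<close>
        U b(1) \<open>b < k\<close>] by blast
  have "d + card Y \<le> n" by (rule min_distance_le[OF code Y(1,2)])
  moreover have "(\<delta> - 1) * ((\<Sum>i=1..s-1. t i) + m) = (\<delta> - 1) * (\<Sum>i=1..s-1. t i) + m * (\<delta> - 1)"
    by (simp add: algebra_simps)
  ultimately show ?thesis
    using that[of m] Y(3,4) b(2,3) \<open>b < k\<close> by linarith
qed

subsection \<open>Ceiling arithmetic\<close>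

lemma zero_le_ceiling_of_nat_divide: "0 \<le> \<lceil>real a / real b\<rceil>"
  using ceiling_mono[of 0 "real a / real b"] by simp

lemma le_nat_ceiling_divide_mult:
  assumes "0 < b"
  shows "a \<le> nat \<lceil>real a / real b\<rceil> * b"
proof -
  have "real a \<le> of_int \<lceil>real a / real b\<rceil> * real b"
    using assms by (intro ceiling_divide_upper) simp
  then have "real a \<le> real (nat \<lceil>real a / real b\<rceil> * b)"
    using zero_le_ceiling_of_nat_divide[of a b] by simp
  then show ?thesis by (simp only: of_nat_le_iff)
qed

text \<open>For D \<ge> 1 the ceiling of (t D - 1) / D is t - 1 or t, so the per-class hypothesis
of the theorem amounts to r (t - 1) + t D \<le> a.\<close>

lemma lower_bound_from_ceiling_hypothesis:
  fixes a r t D :: nat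
  assumes "1 \<le> D" "1 \<le> t"
    and "int r * \<lceil>real_of_int (int t * int D - 1) / real D\<rceil> + (int t * int D - 1) < int a"
  shows "r * (t - 1) + t * D \<le> a"
proof -
  have "real t - 1 \<le> real_of_int (int t * int D - 1) / real D"
    using assms(1) by (simp add: field_simps)
  then have "int t - 1 \<le> \<lceil>real_of_int (int t * int D - 1) / real D\<rceil>"
    unfolding le_ceiling_iff by simp
  then have "int r * (int t - 1) \<le> int r * \<lceil>real_of_int (int t * int D - 1) / real D\<rceil>"
    by (intro mult_left_mono) auto
  then have "int r * (int t - 1) + int t * int D \<le> int a" using assms(3) by linarith
  moreover have "int (r * (t - 1) + t * D) = int r * (int t - 1) + int t * int D"
    using assms(2) by (simp add: of_nat_diff)
  ultimately show ?thesis by linarith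
qed

lemma partial_sums_diff:
  fixes \<Delta> g :: "nat \<Rightarrow> int"
  assumes "\<Delta> 0 = 0" "\<forall>j\<in>{1..N}. \<Delta> j = (\<Sum>i=1..j. g i)" "j \<in> {1..N}"
  shows "\<Delta> j - \<Delta> (j - 1) = g j"
proof -
  have previous: "\<Delta> (j - 1) = (\<Sum>i=1..j-1. g i)"
  proof (cases "j = 1")
    case False
    then have "j - 1 \<in> {1..N}" using assms(3) by auto
    then show ?thesis using assms(2) by blast
  qed (use assms(1) in simp)
  have "{1..j} = insert j {1..j-1}" using assms(3) by auto
  then have "\<Delta> j = (\<Sum>i\<in>insert j {1..j-1}. g i)" using assms(2,3) by simp
  also have "\<dots> = g j + (\<Sum>i=1..j-1. g i)" by (subst sum.insert) auto
  finally show ?thesis using previous by simp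
qed

lemma distance_bound_arith:
  fixes d n k R T m \<rho> D :: nat
  assumes "R < k" "k \<le> R + Suc m * \<rho>" "d + k - 1 + D * (T + m) \<le> n"
  shows "int d \<le> int n - int k + 1 - (int T + \<lceil>real_of_int (int k - int R) / real \<rho>\<rceil> - 1) * int D"
proof -
  have "0 < \<rho>" using assms(1,2) by (cases \<rho>) simp_all
  have "int k \<le> int R + int (Suc m * \<rho>)" using assms(2) by (simp only: of_nat_add[symmetric] of_nat_le_iff)
  then have "real_of_int (int k - int R) \<le> real (Suc m) * real \<rho>"
    by (simp only: of_int_le_iff[symmetric, where 'a = real]) (simp add: algebra_simps)
  then have "\<lceil>real_of_int (int k - int R) / real \<rho>\<rceil> \<le> int (Suc m)"
    using \<open>0 < \<rho>\<close> by (simp add: ceiling_le_iff divide_le_eq)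
  then have "int T + \<lceil>real_of_int (int k - int R) / real \<rho>\<rceil> - 1 \<le> int T + int m" by simp
  then have "(int T + \<lceil>real_of_int (int k - int R) / real \<rho>\<rceil> - 1) * int D \<le> (int T + int m) * int D"
    by (rule mult_right_mono) simp
  moreover have "(int T + int m) * int D = int D * (int T + int m)" by (rule mult.commute)
  moreover have "int d + int k - 1 + int D * (int T + int m) \<le> int n"
  proof -
    have "int (d + k - 1 + D * (T + m)) = int d + int k - 1 + int D * (int T + int m)"
      using assms(1) by (simp add: of_nat_diff)
    moreover have "int (d + k - 1 + D * (T + m)) \<le> int n"
      using assms(3) by (simp only: of_nat_le_iff)
    ultimately show ?thesis by (simp only:)
  qed
  ultimately show ?thesis by linarith
qed

lemma class_bounds_of_ceiling_hypotheses:
  fixes T :: "nat \<Rightarrow> nat set" and r :: "nat \<Rightarrow> nat" and \<delta> s i :: nat and \<Delta> :: "nat \<Rightarrow> int"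
  defines "t \<equiv> \<lambda>i. nat \<lceil>real (card (T i)) / real (r i + \<delta> - 1)\<rceil>"
  assumes "2 \<le> \<delta>" "finite (T i)" "T i \<noteq> {}"
    and "\<Delta> 0 = 0"
    and "\<forall>j\<in>{1..s-1}. \<Delta> j = (\<Sum>i=1..j. \<lceil>real (card (T i)) / real (r i + \<delta> - 1)\<rceil> * (int \<delta> - 1))"
    and "\<forall>j\<in>{1..s-1}. int (r j) * \<lceil>real_of_int (\<Delta> j - \<Delta> (j-1) - 1) / real (\<delta> - 1)\<rceil>
            + (\<Delta> j - \<Delta> (j-1) - 1) < int (card (T j))"
    and i: "i \<in> {1..s-1}"
  shows "card (T i) \<le> t i * (r i + (\<delta> - 1))" and "r i * (t i - 1) + t i * (\<delta> - 1) \<le> card (T i)"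
proof -
  have ceil_t: "\<lceil>real (card (T i)) / real (r i + \<delta> - 1)\<rceil> = int (t i)"
    using zero_le_ceiling_of_nat_divide by (simp add: t_def)
  show upper: "card (T i) \<le> t i * (r i + (\<delta> - 1))"
    using le_nat_ceiling_divide_mult[of "r i + \<delta> - 1" "card (T i)"] assms(2) by (simp add: t_def)
  show "r i * (t i - 1) + t i * (\<delta> - 1) \<le> card (T i)"
  proof (rule lower_bound_from_ceiling_hypothesis)
    show "1 \<le> t i"
      using upper assms(3,4) card_gt_0_iff[of "T i"] by (cases "t i") auto
    have "\<Delta> i - \<Delta> (i - 1) = \<lceil>real (card (T i)) / real (r i + \<delta> - 1)\<rceil> * (int \<delta> - 1)"
      by (rule partial_sums_diff[OF assms(5,6) i])
    then have "\<Delta> i - \<Delta> (i - 1) = int (t i) * int (\<delta> - 1)"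
      unfolding ceil_t using assms(2) by (simp add: of_nat_diff)
    then show "int (r i) * \<lceil>real_of_int (int (t i) * int (\<delta> - 1) - 1) / real (\<delta> - 1)\<rceil>
        + (int (t i) * int (\<delta> - 1) - 1) < int (card (T i))"
      using assms(7) i by metis
  qed (use assms(2) in simp)
qed

theorem corollary1:
  fixes G :: "nat \<Rightarrow> nat \<Rightarrow> 'a::{field,finite}"
    and n k d s \<delta> :: nat and T :: "nat \<Rightarrow> nat set" and r :: "nat \<Rightarrow> nat"
    and \<Delta> :: "nat \<Rightarrow> int"
  assumes "s \<ge> 2" and "\<delta> \<ge> 2"
    and "is_linear_code G n k d"
    and "multiple_localities G n k s T r \<delta>"
    and "\<Delta> 0 = 0"
    and "\<forall>j\<in>{1..s-1}. \<Delta> j = (\<Sum>i=1..j. \<lceil>real (card (T i)) / real (r i + \<delta> - 1)\<rceil> * (int \<delta> - 1))"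
    and "(\<Sum>i=1..s-1. int (r i) * \<lceil>real (card (T i)) / real (r i + \<delta> - 1)\<rceil>) \<le> int k - 1"
    and "\<forall>j\<in>{1..s-1}. int (r j) * \<lceil>real_of_int (\<Delta> j - \<Delta> (j-1) - 1) / real (\<delta> - 1)\<rceil>
            + (\<Delta> j - \<Delta> (j-1) - 1) < int (card (T j))"
  shows "let \<Gamma> = (\<Sum>i=1..s-1. \<lceil>real (card (T i)) / real (r i + \<delta> - 1)\<rceil>)
                 + \<lceil>real_of_int (int k - (\<Sum>i=1..s-1. int (r i) * \<lceil>real (card (T i)) / real (r i + \<delta> - 1)\<rceil>))
                      / real (r s)\<rceil>
         in int d \<le> int n - int k + 1 - (\<Gamma> - 1) * (int \<delta> - 1)"
proof -
  define t where "t i = nat \<lceil>real (card (T i)) / real (r i + \<delta> - 1)\<rceil>" for i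
  have class_bounds: "card (T i) \<le> t i * (r i + (\<delta> - 1))" "r i * (t i - 1) + t i * (\<delta> - 1) \<le> card (T i)"
    if "i \<in> {1..s-1}" for i
  proof -
    have "T i \<noteq> {}" "T i \<subseteq> {1..n}"
      using assms(4) that unfolding multiple_localities_def is_partition_def by auto
    then show "card (T i) \<le> t i * (r i + (\<delta> - 1))" "r i * (t i - 1) + t i * (\<delta> - 1) \<le> card (T i)"
      using class_bounds_of_ceiling_hypotheses[OF assms(2) _ _ assms(5,6,8) that] finite_subset
      unfolding t_def by blast+
  qed
  have R: "(\<Sum>i=1..s-1. int (r i) * \<lceil>real (card (T i)) / real (r i + \<delta> - 1)\<rceil>) = int (\<Sum>i=1..s-1. r i * t i)"
    and T: "(\<Sum>i=1..s-1. \<lceil>real (card (T i)) / real (r i + \<delta> - 1)\<rceil>) = int (\<Sum>i=1..s-1. t i)"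
    using zero_le_ceiling_of_nat_divide by (simp_all add: t_def)
  have R_lt_k: "(\<Sum>i=1..s-1. r i * t i) < k" using assms(7) unfolding R by linarith
  have "1 \<le> s" "1 \<le> \<delta>" using assms(1,2) by simp_all
  then obtain m where "k \<le> (\<Sum>i=1..s-1. r i * t i) + Suc m * r s"
      "d + k - 1 + (\<delta> - 1) * ((\<Sum>i=1..s-1. t i) + m) \<le> n"
    by (rule min_distance_bound_multiple_localities[OF assms(3,4) _ _ class_bounds R_lt_k])
  with R_lt_k have "int d \<le> int n - int k + 1 - (int (\<Sum>i=1..s-1. t i)
      + \<lceil>real_of_int (int k - int (\<Sum>i=1..s-1. r i * t i)) / real (r s)\<rceil> - 1) * int (\<delta> - 1)"
    by (rule distance_bound_arith)
  moreover have "int \<delta> - 1 = int (\<delta> - 1)" using assms(2) by simp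
  ultimately show ?thesis unfolding Let_def R T by (simp only:)
qed

end
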